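(* Let $\varepsilon>0$, $b>0$, $r_c\ge 0$ with $r_c<b$, and $\omega>0$. Consider the matrix $$A=\begin{pmatrix} 0 & \omega^2 & 0 \\ -\omega^2 - \varepsilon \frac{r_c^2 - b^2}{(b^2 + r_c^2)^2} & 0 & 0\\ 0 & -\frac{\varepsilon b}{b^2 + r_c^2} & 0 \end{pmatrix},$$ which governs the linearized growth rates $\mu$ of perturbations $\delta e^{\mu t}(\alpha\cos\omega s,\beta\cos\omega s,\gamma\sin\omega s)$ of the straight-line solution $\mathbf{X}(s,t)=b\mathbf{e}_1 - \varepsilon\frac{b}{b^2+r_c^2} t\,\mathbf{e}_2 + s\mathbf{e}_3$ of the equation $\mathbf{X}_t = \frac{\mathbf{X}_s \wedge \mathbf{X}_{ss}}{|\mathbf{X}_s|^3} - \frac{\varepsilon x_1}{x_1^2 + r_c^2} \frac{\mathbf{X}_s\wedge \mathbf{e}_1 }{|\mathbf{X}_s|}$. Then $A$ has an eigenvalue with positive real part if and only if $$\omega < \frac{\sqrt{\varepsilon (b^2 - r_c^2)}}{b^2 + r_c^2},$$ equivalently, the wavelength $\lambda=2\pi/\omega$ satisfies $\lambda > \frac{2 \pi b}{\sqrt{\varepsilon}}\,\frac{1 + (r_c / b)^2}{\sqrt{1 - (r_c / b)^2}}$.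
   Context: $\mathbf{e}_1,\mathbf{e}_2,\mathbf{e}_3$ is the standard basis of $\mathbb{R}^3$, $\wedge$ is the cross product, $x_1$ is the first component of $\mathbf{X}$. Instability of the straight-line pair means some eigenvalue of $A$ has positive real part. *)

theory Defs
  imports Complex_Main "Jordan_Normal_Form.Char_Poly"
begin

text \<open>The 3x3 linearization matrix A (real entries, viewed as a complex matrix
so that complex eigenvalues are allowed).\<close>
definition linA :: "real \<Rightarrow> real \<Rightarrow> real \<Rightarrow> real \<Rightarrow> complex mat" where
  "linA \<epsilon> b rc \<omega> = mat_of_rows_list 3
     [[0, complex_of_real (\<omega>\<^sup>2), 0],
      [complex_of_real (- \<omega>\<^sup>2 - \<epsilon> * (rc\<^sup>2 - b\<^sup>2) / (b\<^sup>2 + rc\<^sup>2)\<^sup>2), 0, 0],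
      [0, complex_of_real (- \<epsilon> * b / (b\<^sup>2 + rc\<^sup>2)), 0]]"

end

theory Submission
  imports Defs
begin

text \<open>The third column of \<open>linA\<close> vanishes, so apart from the eigenvalue \<open>0\<close> the
  spectrum is that of the block \<open>[[0, p], [q, 0]]\<close>, i.e. the roots of \<open>\<mu>\<^sup>2 = p q\<close>. Here
  \<open>p q = \<omega>\<^sup>2 (X\<^sup>2 - \<omega>\<^sup>2)\<close> with \<open>X = sqrt (\<epsilon> (b\<^sup>2 - rc\<^sup>2)) / (b\<^sup>2 + rc\<^sup>2)\<close>, and a complex
  square root of a real number has positive real part exactly when that number is positive,
  i.e. when \<open>\<omega> < X\<close>.\<close>

lemma mat_of_rows_list_mult_vec_eq_smult_iff:
  fixes p q d \<mu> :: "'a :: comm_ring_1"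
  assumes "v \<in> carrier_vec 3"
  shows "mat_of_rows_list 3 [[0, p, 0], [q, 0, 0], [0, d, 0]] *\<^sub>v v = \<mu> \<cdot>\<^sub>v v \<longleftrightarrow>
    p * v $ 1 = \<mu> * v $ 0 \<and> q * v $ 0 = \<mu> * v $ 1 \<and> d * v $ 1 = \<mu> * v $ 2"
    (is "?M *\<^sub>v v = _ \<longleftrightarrow> _")
proof -
  have mult: "?M *\<^sub>v v = vec 3 (\<lambda>i. if i = 0 then p * v $ 1 else if i = 1 then q * v $ 0 else d * v $ 1)"
    using assms
    by (auto simp: mat_of_rows_list_def mult_mat_vec_def scalar_prod_def numeral_3_eq_3
        lessThan_Suc row_def)
  have smult: "\<mu> \<cdot>\<^sub>v v = vec 3 (\<lambda>i. \<mu> * v $ i)"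
    using assms by auto
  have all3: "(\<forall>i<3. P i) \<longleftrightarrow> P 0 \<and> P 1 \<and> P 2" for P :: "nat \<Rightarrow> bool"
    by (auto simp: numeral_3_eq_3 numeral_2_eq_2 less_Suc_eq)
  show ?thesis
    unfolding mult smult vec_eq_iff by (simp add: all3)
qed

lemma carrier_vec_3_eq_zero_iff:
  assumes "v \<in> carrier_vec 3"
  shows "v = 0\<^sub>v 3 \<longleftrightarrow> v $ 0 = 0 \<and> v $ 1 = 0 \<and> v $ 2 = 0"
  using assms by (auto simp: vec_eq_iff less_Suc_eq numeral_3_eq_3 numeral_2_eq_2)

lemma eigenvalue_mat_of_rows_list_iff:
  fixes p q d \<mu> :: "'a :: idom"
  shows "eigenvalue (mat_of_rows_list 3 [[0, p, 0], [q, 0, 0], [0, d, 0]]) \<mu> \<longleftrightarrow>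
    \<mu> = 0 \<or> \<mu>\<^sup>2 = p * q"
    (is "eigenvalue ?M \<mu> \<longleftrightarrow> _")
proof -
  have "eigenvalue ?M \<mu> \<longleftrightarrow> (\<exists>v \<in> carrier_vec 3. v \<noteq> 0\<^sub>v 3 \<and> ?M *\<^sub>v v = \<mu> \<cdot>\<^sub>v v)"
    by (simp add: eigenvalue_def eigenvector_def mat_of_rows_list_def numeral_3_eq_3 Bex_def)
  also have "\<dots> \<longleftrightarrow> \<mu> = 0 \<or> \<mu>\<^sup>2 = p * q"
  proof
    assume "\<exists>v \<in> carrier_vec 3. v \<noteq> 0\<^sub>v 3 \<and> ?M *\<^sub>v v = \<mu> \<cdot>\<^sub>v v"
    then obtain v where v: "v \<in> carrier_vec 3" "v \<noteq> 0\<^sub>v 3" "?M *\<^sub>v v = \<mu> \<cdot>\<^sub>v v"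
      by blast
    have e0: "p * v $ 1 = \<mu> * v $ 0" and e1: "q * v $ 0 = \<mu> * v $ 1"
      and e2: "d * v $ 1 = \<mu> * v $ 2"
      using v(3) by (simp_all add: mat_of_rows_list_mult_vec_eq_smult_iff[OF v(1)])
    have "\<mu>\<^sup>2 * v $ 0 = p * q * v $ 0"
      by (metis e0 e1 mult.assoc mult.left_commute power2_eq_square)
    moreover have "\<mu>\<^sup>2 * v $ 1 = p * q * v $ 1"
      by (metis e0 e1 mult.assoc mult.commute power2_eq_square)
    ultimately show "\<mu> = 0 \<or> \<mu>\<^sup>2 = p * q"
      using e2 v(2) by (auto simp: carrier_vec_3_eq_zero_iff[OF v(1)])
  next
    assume "\<mu> = 0 \<or> \<mu>\<^sup>2 = p * q"
    define v :: "'a vec" where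
      "v = (if \<mu> = 0 then vec 3 (\<lambda>i. if i = 2 then 1 else 0) else vec 3 (\<lambda>i. [p, \<mu>, d] ! i))"
    have v: "v \<in> carrier_vec 3"
      by (simp add: v_def)
    have "v \<noteq> 0\<^sub>v 3"
      unfolding carrier_vec_3_eq_zero_iff[OF v] by (simp add: v_def)
    moreover have "?M *\<^sub>v v = \<mu> \<cdot>\<^sub>v v"
      unfolding mat_of_rows_list_mult_vec_eq_smult_iff[OF v]
      using \<open>\<mu> = 0 \<or> \<mu>\<^sup>2 = p * q\<close> by (auto simp: v_def power2_eq_square mult.commute)
    ultimately show "\<exists>v \<in> carrier_vec 3. v \<noteq> 0\<^sub>v 3 \<and> ?M *\<^sub>v v = \<mu> \<cdot>\<^sub>v v"
      using v by blast
  qed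
  finally show ?thesis .
qed

lemma exists_square_root_Re_pos_iff:
  fixes r :: real
  shows "(\<exists>\<mu> :: complex. \<mu>\<^sup>2 = of_real r \<and> Re \<mu> > 0) \<longleftrightarrow> r > 0"
proof
  assume "\<exists>\<mu> :: complex. \<mu>\<^sup>2 = of_real r \<and> Re \<mu> > 0"
  then obtain \<mu> :: complex where \<mu>: "\<mu>\<^sup>2 = of_real r" "Re \<mu> > 0"
    by blast
  have "Im (\<mu>\<^sup>2) = 0" and "Re (\<mu>\<^sup>2) = r"
    using \<mu>(1) by simp_all
  then have "Im \<mu> = 0" and "r = (Re \<mu>)\<^sup>2"
    using \<mu>(2) by (simp_all add: Im_power2 Re_power2)
  then show "r > 0"
    using \<mu>(2) by simp
next
  assume "r > 0"
  then have "(of_real (sqrt r) :: complex)\<^sup>2 = of_real r \<and> Re (of_real (sqrt r)) > 0"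
    by (simp flip: of_real_power)
  then show "\<exists>\<mu> :: complex. \<mu>\<^sup>2 = of_real r \<and> Re \<mu> > 0"
    by blast
qed

lemma mult_diff_squares_pos_iff:
  fixes \<omega> X :: real
  assumes "\<omega> > 0" and "X \<ge> 0"
  shows "0 < \<omega>\<^sup>2 * (X\<^sup>2 - \<omega>\<^sup>2) \<longleftrightarrow> \<omega> < X"
proof -
  have "0 < \<omega>\<^sup>2 * (X\<^sup>2 - \<omega>\<^sup>2) \<longleftrightarrow> \<omega>\<^sup>2 < X\<^sup>2"
    using assms by (simp add: zero_less_mult_iff)
  also have "\<dots> \<longleftrightarrow> \<omega> < X"
    using assms by (auto intro: power_strict_mono power2_less_imp_less)
  finally show ?thesis .
qed

lemma wavelength_threshold_eq:
  fixes \<epsilon> b rc :: real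
  assumes "b > 0"
  shows "2 * pi * b / sqrt \<epsilon> * (1 + (rc / b)\<^sup>2) / sqrt (1 - (rc / b)\<^sup>2)
    = 2 * pi / (sqrt (\<epsilon> * (b\<^sup>2 - rc\<^sup>2)) / (b\<^sup>2 + rc\<^sup>2))"
proof -
  have "1 + (rc / b)\<^sup>2 = (b\<^sup>2 + rc\<^sup>2) / b\<^sup>2"
    using assms by (simp add: field_simps)
  moreover have "sqrt (1 - (rc / b)\<^sup>2) = sqrt (b\<^sup>2 - rc\<^sup>2) / b"
  proof -
    have "1 - (rc / b)\<^sup>2 = (b\<^sup>2 - rc\<^sup>2) / b\<^sup>2"
      using assms by (simp add: field_simps)
    then show ?thesis
      using assms by (simp add: real_sqrt_divide)
  qed
  ultimately have "2 * pi * b / sqrt \<epsilon> * (1 + (rc / b)\<^sup>2) / sqrt (1 - (rc / b)\<^sup>2)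
      = 2 * pi * b / sqrt \<epsilon> * ((b\<^sup>2 + rc\<^sup>2) / b\<^sup>2) / (sqrt (b\<^sup>2 - rc\<^sup>2) / b)"
    by simp
  also have "\<dots> = 2 * pi * (b\<^sup>2 + rc\<^sup>2) / (sqrt \<epsilon> * sqrt (b\<^sup>2 - rc\<^sup>2))"
    using assms by (simp add: power2_eq_square)
  also have "\<dots> = 2 * pi / (sqrt (\<epsilon> * (b\<^sup>2 - rc\<^sup>2)) / (b\<^sup>2 + rc\<^sup>2))"
    by (simp add: real_sqrt_mult)
  finally show ?thesis .
qed

theorem mainTheorem2:
  fixes \<epsilon> b rc \<omega> :: real
  assumes "\<epsilon> > 0" and "b > 0" and "rc \<ge> 0" and "rc < b" and "\<omega> > 0"
  shows "((\<exists>\<mu>. eigenvalue (linA \<epsilon> b rc \<omega>) \<mu> \<and> Re \<mu> > 0)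
           \<longleftrightarrow> \<omega> < sqrt (\<epsilon> * (b\<^sup>2 - rc\<^sup>2)) / (b\<^sup>2 + rc\<^sup>2))
       \<and> (\<omega> < sqrt (\<epsilon> * (b\<^sup>2 - rc\<^sup>2)) / (b\<^sup>2 + rc\<^sup>2)
           \<longleftrightarrow> 2 * pi / \<omega> > 2 * pi * b / sqrt \<epsilon> * (1 + (rc / b)\<^sup>2) / sqrt (1 - (rc / b)\<^sup>2))"
proof -
  define X where "X = sqrt (\<epsilon> * (b\<^sup>2 - rc\<^sup>2)) / (b\<^sup>2 + rc\<^sup>2)"
  have "rc\<^sup>2 < b\<^sup>2"
    using assms by (simp add: power_strict_mono)
  then have "X > 0" and "X\<^sup>2 = \<epsilon> * (b\<^sup>2 - rc\<^sup>2) / (b\<^sup>2 + rc\<^sup>2)\<^sup>2"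
    using assms by (simp_all add: X_def power_divide add_pos_nonneg)
  then have "linA \<epsilon> b rc \<omega> = mat_of_rows_list 3 [[0, of_real (\<omega>\<^sup>2), 0],
      [of_real (X\<^sup>2 - \<omega>\<^sup>2), 0, 0], [0, of_real (- \<epsilon> * b / (b\<^sup>2 + rc\<^sup>2)), 0]]"
  proof -
    have "- \<omega>\<^sup>2 - \<epsilon> * (rc\<^sup>2 - b\<^sup>2) / (b\<^sup>2 + rc\<^sup>2)\<^sup>2 = X\<^sup>2 - \<omega>\<^sup>2"
      unfolding \<open>X\<^sup>2 = _\<close> by (simp add: minus_divide_left algebra_simps)
    then show ?thesis
      unfolding linA_def by (simp only:)
  qed
  then have "(\<exists>\<mu>. eigenvalue (linA \<epsilon> b rc \<omega>) \<mu> \<and> Re \<mu> > 0)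
      \<longleftrightarrow> (\<exists>\<mu> :: complex. \<mu>\<^sup>2 = of_real (\<omega>\<^sup>2 * (X\<^sup>2 - \<omega>\<^sup>2)) \<and> Re \<mu> > 0)"
    by (auto simp: eigenvalue_mat_of_rows_list_iff)
  also have "\<dots> \<longleftrightarrow> \<omega> < X"
    unfolding exists_square_root_Re_pos_iff
    using assms(5) \<open>X > 0\<close> by (simp add: mult_diff_squares_pos_iff)
  moreover have "2 * pi / \<omega> > 2 * pi / X \<longleftrightarrow> \<omega> < X"
    using assms(5) \<open>X > 0\<close> by (simp add: field_simps)
  ultimately show ?thesis
    unfolding wavelength_threshold_eq[OF assms(2)] X_def[symmetric] by blast
qed

end
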